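(* Let $\Omega$ be a region of $\mathbb{C}$ and let $F:\Omega\to\mathbb{M}_n$ be analytic. Suppose that for each $k=1,\ldots,n$ the function $z\mapsto s_k(F(z))$ attains its maximum value on $\Omega$ (at some point $z_k\in\Omega$, possibly different for different $k$). Then $F$ is constant on $\Omega$.
   Context: A region is a nonempty open connected subset of $\mathbb{C}$. $\mathbb{M}_n$ is the set of $n\times n$ complex matrices; $F$ is analytic if each entry is analytic. For $A\in\mathbb{M}_n$, the singular values $s_1(A)\geq s_2(A)\geq\cdots\geq s_n(A)\geq 0$ are the nonnegative square roots of the eigenvalues of $A^*A$, listed in nonincreasing order. *)

theory Defs
  imports "HOL-Analysis.Analysis" "HOL-Computational_Algebra.Fundamental_Theorem_Algebra"
begin

definition adjoint_mat :: "complex^'n^'n \<Rightarrow> complex^'n^'n" where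
  "adjoint_mat A = (\<chi> i j. cnj (A $ j $ i))"

definition charpoly :: "complex^'n^'n \<Rightarrow> complex poly" where
  "charpoly A = det (\<chi> i j. (if i = j then [:0, 1:] else 0) - [:A $ i $ j:])"

text \<open>Eigenvalues of A^* A counted with algebraic multiplicity (they are real and
  nonnegative), listed in nonincreasing order.\<close>
definition sv_eigs :: "complex^'n^'n \<Rightarrow> real list" where
  "sv_eigs A = rev (sorted_list_of_multiset
       (image_mset Re (proots (charpoly (adjoint_mat A ** A)))))"

definition sing_val :: "nat \<Rightarrow> complex^'n^'n \<Rightarrow> real" where
  "sing_val k A = sqrt (sv_eigs A ! (k - 1))"

end

(*
  Let \<lambda>\<^sub>1(A) \<ge> ... \<ge> \<lambda>\<^sub>n(A) be the eigenvalues of A\<^sup>* A, so that s\<^sub>k(A) = sqrt \<lambda>\<^sub>k(A), and let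
  z\<^sub>k be a point where s\<^sub>k(F z) is maximal. By induction on k we build orthonormal vectors
  v\<^sub>1, ..., v\<^sub>k such that F(z) v\<^sub>i does not depend on z and v\<^sub>i is an eigenvector of
  F(z)\<^sup>* F(z) with eigenvalue \<lambda>\<^sub>i(F z\<^sub>i), for every z. For each z the v\<^sub>i then span
  eigenvectors of the k largest eigenvalues, so \<lambda>\<^sub>k\<^sub>+\<^sub>1(F z) is the maximum of \<parallel>F(z) y\<parallel>\<^sup>2 over
  unit vectors y orthogonal to them. Take such a maximiser x for z = z\<^sub>k\<^sub>+\<^sub>1. Then
  \<parallel>F(z) x\<parallel> \<le> \<parallel>F(z\<^sub>k\<^sub>+\<^sub>1) x\<parallel> for all z, and the maximum modulus principle applied to
  z \<mapsto> \<langle>F(z) x, F(z\<^sub>k\<^sub>+\<^sub>1) x\<rangle> forces F(z) x to be constant; Cauchy-Schwarz then makes x a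
  common eigenvector. After n steps F(z) agrees with F(z\<^sub>0) on an orthonormal basis.
*)
theory Submission
  imports Defs "HOL-Complex_Analysis.Conformal_Mappings"
begin

section \<open>Complex inner product\<close>

definition cinner :: "complex^'n \<Rightarrow> complex^'n \<Rightarrow> complex" where
  "cinner x y = (\<Sum>i\<in>UNIV. x $ i * cnj (y $ i))"

lemma cinner_add_left: "cinner (x + y) z = cinner x z + cinner y z"
  by (simp add: cinner_def distrib_right sum.distrib)

lemma cinner_diff_left: "cinner (x - y) z = cinner x z - cinner y z"
  by (simp add: cinner_def left_diff_distrib sum_subtractf)

lemma cinner_zero_left [simp]: "cinner 0 y = 0"
  by (simp add: cinner_def)

lemma cinner_scale_left: "cinner (c *s x) y = c * cinner x y"
  by (simp add: cinner_def sum_distrib_left mult.assoc)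

lemma cinner_scaleR_left: "cinner (r *\<^sub>R x) y = of_real r * cinner x y"
  by (simp add: cinner_def sum_distrib_left scaleR_vec_def scaleR_conv_of_real mult.assoc)

lemma cinner_scaleR_right: "cinner x (r *\<^sub>R y) = of_real r * cinner x y"
  by (simp add: cinner_def sum_distrib_left scaleR_vec_def scaleR_conv_of_real mult_ac)

lemma cinner_sum_left: "cinner (\<Sum>a\<in>A. f a) y = (\<Sum>a\<in>A. cinner (f a) y)"
  unfolding cinner_def sum_component sum_distrib_right by (rule sum.swap)

lemma cinner_commute: "cinner y x = cnj (cinner x y)"
  by (simp add: cinner_def mult.commute)

lemma cinner_eq_0_commute: "cinner y x = 0 \<longleftrightarrow> cinner x y = 0"
  by (metis cinner_commute complex_cnj_zero_iff)

lemma Re_cinner: "Re (cinner x y) = inner x y"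
  by (simp add: cinner_def inner_vec_def inner_complex_def)

lemma cinner_self: "cinner x x = of_real ((norm x)\<^sup>2)"
proof -
  have "cinner x x = (\<Sum>i\<in>UNIV. of_real ((cmod (x $ i))\<^sup>2))"
    unfolding cinner_def by (intro sum.cong refl) (simp add: complex_norm_square[symmetric])
  then show ?thesis
    by (simp add: norm_vec_def L2_set_def sum_nonneg)
qed

lemma cinner_self_eq_1_iff: "cinner x x = 1 \<longleftrightarrow> norm x = 1"
proof -
  have "cinner x x = 1 \<longleftrightarrow> (norm x)\<^sup>2 = 1"
    by (metis cinner_self of_real_eq_1_iff)
  also have "\<dots> \<longleftrightarrow> norm x = 1"
    by (simp add: power2_eq_1_iff) (use norm_ge_zero[of x] in linarith)
  finally show ?thesis .
qed

lemma norm_vector_scale: "norm (c *s (x::complex^'n)) = cmod c * norm x"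
proof -
  have "(norm (c *s x))\<^sup>2 = (cmod c * norm x)\<^sup>2"
    by (simp add: norm_vec_def L2_set_def sum_nonneg power_mult_distrib norm_mult sum_distrib_left)
  then show ?thesis by simp
qed

lemma norm_diff_square_cinner:
  "(norm (x - y))\<^sup>2 = (norm x)\<^sup>2 - 2 * Re (cinner x y) + (norm y)\<^sup>2"
  by (simp add: Re_cinner dot_norm_neg field_simps)

lemma norm_cinner_le: "cmod (cinner x y) \<le> norm x * norm y"
proof (cases "cinner x y = 0")
  case False
  define u where "u = cnj (cinner x y) / cmod (cinner x y)"
  have "cnj (cinner x y) * cinner x y = (cmod (cinner x y))\<^sup>2"
    by (simp add: mult.commute flip: complex_norm_square)
  then have "cmod (cinner x y) = Re (cinner (u *s x) y)"
    using False by (simp add: u_def cinner_scale_left power2_eq_square)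
  also have "\<dots> \<le> norm (u *s x) * norm y"
    unfolding Re_cinner by (rule norm_cauchy_schwarz)
  also have "norm (u *s x) = norm x"
    using False by (simp add: u_def norm_vector_scale norm_divide)
  finally show ?thesis .
qed simp

section \<open>Orthonormal lists\<close>

definition orth_compl :: "(complex^'n) list \<Rightarrow> (complex^'n) set" where
  "orth_compl V = {y. \<forall>v\<in>set V. cinner y v = 0}"

lemma subspace_orth_compl: "subspace (orth_compl V)"
  by (auto simp: subspace_def orth_compl_def cinner_add_left cinner_scaleR_left)

definition orthonormal :: "(complex^'n) list \<Rightarrow> bool" where
  "orthonormal V \<longleftrightarrow> distinct V \<and>
     (\<forall>v\<in>set V. norm v = 1) \<and> (\<forall>v\<in>set V. \<forall>w\<in>set V. v \<noteq> w \<longrightarrow> cinner v w = 0)"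

lemma orthonormal_single: "orthonormal [x] \<longleftrightarrow> norm x = 1"
  by (simp add: orthonormal_def)

lemma orthonormal_nth:
  assumes "orthonormal V" "i < length V" "j < length V"
  shows "cinner (V ! i) (V ! j) = (if i = j then 1 else 0)"
  using assms by (auto simp: orthonormal_def nth_eq_iff_index_eq cinner_self_eq_1_iff)

lemma orthonormal_append:
  "orthonormal (V @ W) \<longleftrightarrow> orthonormal V \<and> orthonormal W \<and> set W \<subseteq> orth_compl V"
proof -
  have "set V \<inter> set W = {}"
    if "\<forall>v\<in>set V. norm v = 1" "\<forall>w\<in>set W. \<forall>v\<in>set V. cinner w v = 0"
    using that by (fastforce simp: cinner_self)
  then show ?thesis
    unfolding orthonormal_def orth_compl_def set_append distinct_append subset_iff mem_Collect_eq
    by (smt (verit) Un_iff cinner_eq_0_commute disjoint_iff)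
qed

lemma exists_unit_orth_compl:
  assumes V: "orthonormal V" and len: "length V < CARD('n)"
  obtains x :: "complex^'n" where "x \<in> orth_compl V" "norm x = 1"
proof -
  have "vec.span (set V) \<noteq> UNIV"
  proof
    assume "vec.span (set V) = UNIV"
    then have "CARD('n) \<le> card (set V)"
      by (metis vec.dim_le_card vec_dim_card finite_set order_refl)
    then show False using len card_length[of V] by linarith
  qed
  then obtain y where y: "y \<notin> vec.span (set V)" by blast
  define x where "x = y - (\<Sum>v\<in>set V. cinner y v *s v)"
  have "cinner x w = 0" if "w \<in> set V" for w
  proof -
    have "(\<Sum>v\<in>set V. cinner y v * cinner v w) = (\<Sum>v\<in>set V. if v = w then cinner y w else 0)"
      using V that by (intro sum.cong) (auto simp: orthonormal_def cinner_self_eq_1_iff)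
    also have "\<dots> = cinner y w"
      using that by simp
    finally have "(\<Sum>v\<in>set V. cinner y v * cinner v w) = cinner y w" .
    then show ?thesis by (simp add: x_def cinner_diff_left cinner_sum_left cinner_scale_left)
  qed
  then have x: "x \<in> orth_compl V" by (simp add: orth_compl_def)
  have "(\<Sum>v\<in>set V. cinner y v *s v) \<in> vec.span (set V)"
    by (intro vec.span_sum vec.span_scale vec.span_base)
  then have "x \<noteq> 0"
    using y by (auto simp: x_def)
  show thesis
  proof
    show "(1 / norm x) *\<^sub>R x \<in> orth_compl V"
      using subspace_orth_compl x by (rule subspace_scale)
    show "norm ((1 / norm x) *\<^sub>R x) = 1"
      using \<open>x \<noteq> 0\<close> by simp
  qed
qed

lemma cinner_adjoint: "cinner (M *v x) y = cinner x (adjoint_mat M *v y)"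
proof -
  have "cinner (M *v x) y = (\<Sum>i\<in>UNIV. \<Sum>j\<in>UNIV. M $ i $ j * x $ j * cnj (y $ i))"
    by (simp add: cinner_def matrix_vector_mult_def sum_distrib_right)
  also have "\<dots> = (\<Sum>j\<in>UNIV. \<Sum>i\<in>UNIV. M $ i $ j * x $ j * cnj (y $ i))"
    by (rule sum.swap)
  also have "\<dots> = cinner x (adjoint_mat M *v y)"
    by (simp add: cinner_def matrix_vector_mult_def adjoint_mat_def sum_distrib_left mult_ac)
  finally show ?thesis .
qed

lemma adjoint_mat_adjoint_mat [simp]: "adjoint_mat (adjoint_mat A) = A"
  by (simp add: adjoint_mat_def vec_eq_iff)

lemma cinner_gram_left:
  "cinner ((adjoint_mat A ** A) *v x) y = cinner (A *v x) (A *v y)"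
  by (metis cinner_adjoint adjoint_mat_adjoint_mat matrix_vector_mul_assoc)

lemma cinner_gram_right:
  "cinner x ((adjoint_mat A ** A) *v y) = cinner (A *v x) (A *v y)"
  by (metis cinner_commute cinner_gram_left)

lemma matrix_vector_mult_scaleR_complex: "(A::complex^'n^'m) *v (r *\<^sub>R x) = r *\<^sub>R (A *v x)"
  by (simp add: vec_eq_iff matrix_vector_mult_def scaleR_vec_def scaleR_conv_of_real
      sum_distrib_left mult_ac)

lemma matrix_diff_ldistrib: "(A::'a::ring_1^'n^'m) ** (B - C) = A ** B - A ** C"
  by (simp add: matrix_matrix_mult_def vec_eq_iff sum_subtractf algebra_simps)

lemma matrix_diff_rdistrib: "((A::'a::ring_1^'n^'m) - B) ** C = A ** C - B ** C"
  by (simp add: matrix_matrix_mult_def vec_eq_iff sum_subtractf algebra_simps)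

lemma matrix_mul_mat_commute: "(A::'a::comm_ring_1^'n^'n) ** mat c = mat c ** A"
  unfolding matrix_matrix_mult_def mat_def
  by (auto simp: vec_eq_iff if_distrib if_distribR mult.commute cong: if_cong)

lemma orthonormal_basis_unitary:
  fixes B :: "(complex^'n) list"
  assumes B: "orthonormal B" "length B = CARD('n)"
  obtains idx :: "'n \<Rightarrow> nat" and U :: "complex^'n^'n"
  where "bij_betw idx UNIV {..<CARD('n)}" "\<And>i j. U $ i $ j = B ! idx j $ i"
    "U ** adjoint_mat U = mat 1"
proof -
  obtain idx :: "'n \<Rightarrow> nat" where idx: "bij_betw idx UNIV {..<CARD('n)}"
    using ex_bij_betw_finite_nat[of "UNIV :: 'n set"] by (auto simp: atLeast0LessThan)
  then have idx_less: "idx j < length B" and idx_eq: "idx j = idx j' \<longleftrightarrow> j = j'" for j j'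
    using B(2) by (auto simp: bij_betw_def inj_on_def)
  define U :: "complex^'n^'n" where "U = (\<chi> i j. B ! idx j $ i)"
  have "(adjoint_mat U ** U) $ j $ j' = cinner (B ! idx j') (B ! idx j)" for j j'
    by (simp add: adjoint_mat_def U_def matrix_matrix_mult_def cinner_def mult.commute)
  then have "adjoint_mat U ** U = mat 1"
    using orthonormal_nth[OF B(1) idx_less idx_less] by (simp add: vec_eq_iff mat_def idx_eq)
  then have "U ** adjoint_mat U = mat 1"
    by (rule matrix_left_right_inverse[THEN iffD1])
  then show thesis
    by (intro that[OF idx]) (simp_all add: U_def)
qed

lemma matrix_eq_on_orthonormal_basis:
  fixes M N :: "complex^'n^'n"
  assumes "orthonormal B" "length B = CARD('n)" "\<And>v. v \<in> set B \<Longrightarrow> M *v v = N *v v"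
  shows "M = N"
proof -
  obtain idx U where idx: "bij_betw idx UNIV {..<CARD('n)}"
    and U: "\<And>i j. U $ i $ j = B ! idx j $ i" "U ** adjoint_mat U = mat 1"
    using orthonormal_basis_unitary[OF assms(1,2)] by blast
  have col: "(L ** U) $ i $ j = (L *v (B ! idx j)) $ i" for L :: "complex^'n^'n" and i j
    by (simp add: U matrix_matrix_mult_def matrix_vector_mult_def)
  have "B ! idx j \<in> set B" for j
    using idx assms(2) by (intro nth_mem) (auto simp: bij_betw_def)
  then have "M ** U = N ** U"
    using assms(3) by (simp add: vec_eq_iff col)
  then show ?thesis
    by (metis U(2) matrix_mul_assoc matrix_mul_rid)
qed

section \<open>Eigenvectors of the Gram matrix\<close>

abbreviation eigenpairs :: "complex^'n^'n \<Rightarrow> (complex^'n) list \<Rightarrow> real list \<Rightarrow> bool" where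
  "eigenpairs H V ds \<equiv> list_all2 (\<lambda>v d. H *v v = d *\<^sub>R v) V ds"

lemma gram_maps_orth_compl:
  assumes "eigenpairs (adjoint_mat A ** A) V ds" "y \<in> orth_compl V"
  shows "(adjoint_mat A ** A) *v y \<in> orth_compl V"
  unfolding orth_compl_def
proof (intro CollectI ballI)
  fix v assume "v \<in> set V"
  then obtain i where "i < length V" "v = V ! i"
    by (auto simp: in_set_conv_nth)
  then obtain d where "(adjoint_mat A ** A) *v v = d *\<^sub>R v"
    using list_all2_nthD[OF assms(1)] by blast
  have "cinner ((adjoint_mat A ** A) *v y) v = cinner y ((adjoint_mat A ** A) *v v)"
    by (simp only: cinner_gram_left cinner_gram_right)
  also have "\<dots> = of_real d * cinner y v"
    by (simp add: \<open>(adjoint_mat A ** A) *v v = d *\<^sub>R v\<close> cinner_scaleR_right)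
  finally have "cinner ((adjoint_mat A ** A) *v y) v = of_real d * cinner y v" .
  then show "cinner ((adjoint_mat A ** A) *v y) v = 0"
    using assms(2) \<open>v \<in> set V\<close> by (simp add: orth_compl_def)
qed

lemma gram_eigenvalue:
  assumes "(adjoint_mat A ** A) *v v = d *\<^sub>R v" "norm v = 1"
  shows "d = (norm (A *v v))\<^sup>2"
proof -
  have "cinner ((adjoint_mat A ** A) *v v) v = of_real d"
    using assms by (simp add: cinner_scaleR_left cinner_self)
  then show ?thesis by (simp add: cinner_gram_left cinner_self del: of_real_power)
qed

(* With h = A\<^sup>* A x one gets \<parallel>h\<parallel>\<^sup>2 = \<langle>A x, A h\<rangle> \<le> m \<parallel>h\<parallel> (h stays in the invariant
   subspace orth_compl V) and Re \<langle>h, x\<rangle> = m, which together force h = m x. *)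
lemma gram_eigenvector_of_maximizer:
  assumes V: "eigenpairs (adjoint_mat A ** A) V ds"
    and bound: "\<And>y. y \<in> orth_compl V \<Longrightarrow> (norm (A *v y))\<^sup>2 \<le> m * (norm y)\<^sup>2"
    and x: "x \<in> orth_compl V" "norm x = 1" "(norm (A *v x))\<^sup>2 = m"
  shows "(adjoint_mat A ** A) *v x = m *\<^sub>R x"
proof -
  define h where "h = (adjoint_mat A ** A) *v x"
  have m0: "0 \<le> m" and Ax: "norm (A *v x) = sqrt m"
    unfolding x(3)[symmetric] by simp_all
  have "h \<in> orth_compl V"
    unfolding h_def using V x(1) by (rule gram_maps_orth_compl)
  then have "(norm (A *v h))\<^sup>2 \<le> (sqrt m * norm h)\<^sup>2"
    using bound m0 by (simp add: power_mult_distrib)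
  then have Ah: "norm (A *v h) \<le> sqrt m * norm h"
    by (rule power2_le_imp_le) (simp add: m0)
  have "(norm h)\<^sup>2 = Re (cinner h h)"
    by (simp add: cinner_self)
  also have "\<dots> = inner (A *v x) (A *v h)"
    by (simp add: h_def cinner_gram_left Re_cinner)
  also have "\<dots> \<le> norm (A *v x) * norm (A *v h)"
    by (rule norm_cauchy_schwarz)
  also have "\<dots> \<le> sqrt m * (sqrt m * norm h)"
    unfolding Ax by (rule mult_left_mono[OF Ah]) (simp add: m0)
  also have "\<dots> = m * norm h"
    using m0 by simp
  finally have "norm h \<le> m"
    by (cases "h = 0") (simp_all add: m0 power2_eq_square)
  have "Re (cinner h x) = m"
    by (simp add: h_def cinner_gram_left cinner_self x(3))
  then have "(norm (h - m *\<^sub>R x))\<^sup>2 = (norm h)\<^sup>2 - m\<^sup>2"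
    unfolding norm_diff_square_cinner using m0 x(2) by (simp add: cinner_scaleR_right power2_eq_square)
  also have "\<dots> \<le> 0"
    using \<open>norm h \<le> m\<close> by (simp add: power_mono)
  finally show ?thesis
    by (simp add: h_def)
qed

lemma exists_norm_maximizer_orth_compl:
  assumes "orthonormal V" "length V < CARD('n)"
  obtains x :: "complex^'n" where "x \<in> orth_compl V" "norm x = 1"
    "\<And>y. y \<in> orth_compl V \<Longrightarrow> (norm (A *v y))\<^sup>2 \<le> (norm (A *v x))\<^sup>2 * (norm y)\<^sup>2"
proof -
  define S where "S = orth_compl V \<inter> sphere 0 1"
  have "compact S"
    unfolding S_def by (intro closed_Int_compact closed_subspace subspace_orth_compl compact_sphere)
  moreover have "S \<noteq> {}"
  proof -
    obtain x0 where "x0 \<in> orth_compl V" "norm x0 = 1"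
      using exists_unit_orth_compl[OF assms] .
    then show ?thesis
      by (auto simp: S_def)
  qed
  moreover have "continuous_on S (\<lambda>y. norm (A *v y))"
    by (intro continuous_on_norm matrix_vector_mult_linear_continuous_on)
  ultimately obtain x where "x \<in> S" and max: "\<And>y. y \<in> S \<Longrightarrow> norm (A *v y) \<le> norm (A *v x)"
    using continuous_attains_sup by metis
  have bound: "norm (A *v y) \<le> norm (A *v x) * norm y" if "y \<in> orth_compl V" for y
  proof (cases "y = 0")
    case False
    have y1: "(1 / norm y) *\<^sub>R y \<in> S"
      using False subspace_scale[OF subspace_orth_compl that] by (simp add: S_def)
    have "norm (A *v ((1 / norm y) *\<^sub>R y)) = norm (A *v y) / norm y"
      unfolding matrix_vector_mult_scaleR_complex by simp
    then have "norm (A *v y) / norm y \<le> norm (A *v x)"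
      using max[OF y1] by simp
    then show ?thesis
      using False by (simp add: divide_le_eq)
  qed simp
  show thesis
  proof (rule that)
    show "x \<in> orth_compl V" "norm x = 1"
      using \<open>x \<in> S\<close> by (auto simp: S_def)
    show "(norm (A *v y))\<^sup>2 \<le> (norm (A *v x))\<^sup>2 * (norm y)\<^sup>2" if "y \<in> orth_compl V" for y
      using power_mono[OF bound[OF that] norm_ge_zero] by (simp only: power_mult_distrib)
  qed
qed

lemma exists_gram_eigenvector_orth_compl:
  assumes "orthonormal V" "eigenpairs (adjoint_mat A ** A) V ds" "length V < CARD('n)"
  obtains x :: "complex^'n" where "x \<in> orth_compl V" "norm x = 1"
    "(adjoint_mat A ** A) *v x = (norm (A *v x))\<^sup>2 *\<^sub>R x"
    "\<And>y. y \<in> orth_compl V \<Longrightarrow> (norm (A *v y))\<^sup>2 \<le> (norm (A *v x))\<^sup>2 * (norm y)\<^sup>2"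
proof -
  obtain x :: "complex^'n" where x: "x \<in> orth_compl V" "norm x = 1"
    and max: "\<And>y. y \<in> orth_compl V \<Longrightarrow> (norm (A *v y))\<^sup>2 \<le> (norm (A *v x))\<^sup>2 * (norm y)\<^sup>2"
    using exists_norm_maximizer_orth_compl[OF assms(1,3)] by blast
  have "(adjoint_mat A ** A) *v x = (norm (A *v x))\<^sup>2 *\<^sub>R x"
    using assms(2) max x refl by (rule gram_eigenvector_of_maximizer)
  with x max show thesis
    using that by blast
qed

lemma extend_gram_eigenbasis:
  fixes A :: "complex^'n^'n"
  assumes "orthonormal V" "eigenpairs (adjoint_mat A ** A) V ds" "length V \<le> CARD('n)"
  shows "\<exists>W es. orthonormal (V @ W) \<and> eigenpairs (adjoint_mat A ** A) (V @ W) (ds @ es) \<and>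
    length (V @ W) = CARD('n)"
  using assms
proof (induction "CARD('n) - length V" arbitrary: V ds)
  case 0
  then show ?case
    by (intro exI[of _ "[]"]) auto
next
  case (Suc k)
  then have "length V < CARD('n)"
    by simp
  then obtain x where x: "x \<in> orth_compl V" "norm x = 1"
    "(adjoint_mat A ** A) *v x = (norm (A *v x))\<^sup>2 *\<^sub>R x"
    using exists_gram_eigenvector_orth_compl[OF Suc.prems(1,2)] by blast
  define m where "m = (norm (A *v x))\<^sup>2"
  have "k = CARD('n) - length (V @ [x])" "length (V @ [x]) \<le> CARD('n)"
    using Suc.hyps(2) by simp_all
  moreover have "orthonormal (V @ [x])"
    using Suc.prems(1) x by (simp add: orthonormal_append orthonormal_single)
  moreover have "eigenpairs (adjoint_mat A ** A) (V @ [x]) (ds @ [m])"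
    using Suc.prems(2) x(3) by (simp add: list_all2_appendI m_def)
  ultimately obtain W es where "orthonormal ((V @ [x]) @ W)"
    "eigenpairs (adjoint_mat A ** A) ((V @ [x]) @ W) ((ds @ [m]) @ es)"
    "length ((V @ [x]) @ W) = CARD('n)"
    using Suc.hyps(1) by blast
  then show ?case
    by (intro exI[of _ "x # W"] exI[of _ "m # es"]) simp
qed

section \<open>Characteristic polynomial of the Gram matrix\<close>

definition const_poly_mat :: "'a::comm_ring_1^'n^'m \<Rightarrow> 'a poly^'n^'m" where
  "const_poly_mat A = (\<chi> i j. [:A $ i $ j:])"

lemma const_poly_mat_mult: "const_poly_mat (A ** B) = const_poly_mat A ** const_poly_mat B"
  by (simp add: const_poly_mat_def matrix_matrix_mult_def vec_eq_iff sum_to_poly mult_ac)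

lemma const_poly_mat_one: "const_poly_mat (mat 1) = mat 1"
  by (simp add: const_poly_mat_def mat_def vec_eq_iff)

lemma charpoly_eq_det: "charpoly A = det (mat [:0, 1:] - const_poly_mat A)"
  unfolding charpoly_def const_poly_mat_def mat_def by (rule arg_cong[where f = det]) (simp add: vec_eq_iff)

lemma charpoly_similar:
  fixes A P Q :: "complex^'n^'n"
  assumes "P ** Q = mat 1"
  shows "charpoly (P ** A ** Q) = charpoly A"
proof -
  let ?X = "mat [:0, 1:] :: complex poly^'n^'n" and ?c = const_poly_mat
  have "?c P ** ?X = ?X ** ?c P"
    by (rule matrix_mul_mat_commute)
  then have "?c P ** ?X ** ?c Q = ?X ** ?c (P ** Q)"
    by (simp add: const_poly_mat_mult matrix_mul_assoc)
  also have "\<dots> = ?X"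
    by (simp add: assms const_poly_mat_one)
  finally have X: "?c P ** ?X ** ?c Q = ?X" .
  have "?X - ?c (P ** A ** Q) = ?c P ** (?X - ?c A) ** ?c Q"
    by (simp add: X const_poly_mat_mult matrix_diff_ldistrib matrix_diff_rdistrib)
  then have "charpoly (P ** A ** Q) = det (?c P) * det (?c Q) * charpoly A"
    by (simp add: charpoly_eq_det det_mul)
  also have "det (?c P) * det (?c Q) = 1"
    by (simp flip: det_mul const_poly_mat_mult add: assms const_poly_mat_one)
  finally show ?thesis
    by simp
qed

lemma charpoly_diagonal:
  fixes D :: "complex^'n^'n"
  assumes "\<And>i j. i \<noteq> j \<Longrightarrow> D $ i $ j = 0"
  shows "charpoly D = (\<Prod>i\<in>UNIV. [:- D $ i $ i, 1:])"
  unfolding charpoly_eq_det using assms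
  by (subst det_diagonal) (auto simp: const_poly_mat_def mat_def)

lemma prod_list_map_eq_prod_nth:
  "(\<Prod>x\<leftarrow>xs. f x) = (\<Prod>k<length xs. (f (xs ! k) :: 'a::comm_monoid_mult))"
  by (induction xs rule: rev_induct) (simp_all add: nth_append mult.commute)

lemma charpoly_of_eigenbasis:
  fixes H :: "complex^'n^'n"
  assumes B: "orthonormal B" "eigenpairs H B ds" "length B = CARD('n)"
  shows "charpoly H = (\<Prod>d\<leftarrow>ds. [:- of_real d, 1:])"
proof -
  obtain idx U where idx: "bij_betw idx UNIV {..<CARD('n)}"
    and U: "\<And>i j. U $ i $ j = B ! idx j $ i" "U ** adjoint_mat U = mat 1"
    using orthonormal_basis_unitary[OF B(1,3)] by blast
  have idx_less: "idx j < length B" for j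
    using idx B(3) by (auto simp: bij_betw_def)
  define D :: "complex^'n^'n" where "D = (\<chi> i j. if i = j then of_real (ds ! idx j) else 0)"
  have "(H ** U) $ i $ j = (U ** D) $ i $ j" for i j
  proof -
    have "(H ** U) $ i $ j = (H *v (B ! idx j)) $ i"
      by (simp add: U matrix_matrix_mult_def matrix_vector_mult_def)
    also have "\<dots> = of_real (ds ! idx j) * U $ i $ j"
      using list_all2_nthD[OF B(2) idx_less] by (simp add: U scaleR_vec_def scaleR_conv_of_real)
    also have "\<dots> = (U ** D) $ i $ j"
      by (simp add: D_def matrix_matrix_mult_def if_distrib if_distribR mult.commute cong: if_cong)
    finally show ?thesis .
  qed
  then have "H = U ** D ** adjoint_mat U"
    by (metis U(2) matrix_mul_assoc matrix_mul_rid vec_eq_iff)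
  then have "charpoly H = charpoly D"
    using U(2) by (simp add: charpoly_similar)
  also have "\<dots> = (\<Prod>j\<in>UNIV. [:- of_real (ds ! idx j), 1:])"
    by (subst charpoly_diagonal) (simp_all add: D_def)
  also have "\<dots> = (\<Prod>k<CARD('n). [:- of_real (ds ! k), 1:])"
    by (rule prod.reindex_bij_betw[OF idx])
  also have "\<dots> = (\<Prod>d\<leftarrow>ds. [:- of_real d, 1:])"
    using list_all2_lengthD[OF B(2)] B(3) by (simp add: prod_list_map_eq_prod_nth)
  finally show ?thesis .
qed

lemma proots_prod_linear_factors: "proots (\<Prod>c\<leftarrow>cs. [:- c, 1:]) = mset (cs :: 'a::idom list)"
proof (induction cs)
  case (Cons c cs)
  have "(\<Prod>c\<leftarrow>cs. [:- c, 1:]) \<noteq> 0"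
    by (auto simp: prod_list_zero_iff)
  with Cons show ?case
    by (simp add: proots_mult del: mult_pCons_left)
qed simp

lemma sv_eigs_of_eigenbasis:
  fixes A :: "complex^'n^'n"
  assumes "orthonormal B" "eigenpairs (adjoint_mat A ** A) B ds" "length B = CARD('n)"
  shows "sv_eigs A = rev (sort ds)"
  using proots_prod_linear_factors[of "map complex_of_real ds"]
  by (simp add: sv_eigs_def charpoly_of_eigenbasis[OF assms] multiset.map_comp o_def)

section \<open>Singular values as constrained maxima\<close>

lemma length_filter_ge:
  assumes "c \<le> length xs" "\<And>i. i < c \<Longrightarrow> P (xs ! i)"
  shows "c \<le> length (filter P xs)"
proof -
  have "{..<c} \<subseteq> {i. i < length xs \<and> P (xs ! i)}"
    using assms by auto
  then have "card {..<c} \<le> card {i. i < length xs \<and> P (xs ! i)}"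
    by (intro card_mono) auto
  then show ?thesis
    by (simp add: length_filter_conv_card)
qed

lemma le_rev_sort_nth_iff:
  fixes xs :: "'a::linorder list"
  assumes j: "j < length xs"
  shows "t \<le> rev (sort xs) ! j \<longleftrightarrow> j < length (filter ((\<le>) t) xs)"
proof -
  define L where "L = rev (sort xs)"
  define I where "I = {i. i < length xs \<and> t \<le> L ! i}"
  have antimono: "L ! b \<le> L ! a" if "a \<le> b" "b < length xs" for a b
    using that by (simp add: L_def rev_nth sorted_nth_mono)
  have "length (filter ((\<le>) t) xs) = length (filter ((\<le>) t) L)"
    by (metis L_def mset_filter mset_rev mset_sort size_mset)
  also have "\<dots> = card I"
    by (simp add: I_def L_def length_filter_conv_card)
  finally have count: "length (filter ((\<le>) t) xs) = card I" .
  show ?thesis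
  proof
    assume "t \<le> rev (sort xs) ! j"
    then have "{..j} \<subseteq> I"
      using antimono j by (force simp: I_def L_def)
    then have "card {..j} \<le> card I"
      by (intro card_mono) (auto simp: I_def)
    then show "j < length (filter ((\<le>) t) xs)"
      by (simp add: count)
  next
    assume "j < length (filter ((\<le>) t) xs)"
    show "t \<le> rev (sort xs) ! j"
    proof (rule ccontr)
      assume "\<not> t \<le> rev (sort xs) ! j"
      then have "I \<subseteq> {..<j}"
        using antimono j by (force simp: I_def L_def not_le)
      then have "card I \<le> card {..<j}"
        by (intro card_mono) auto
      with \<open>j < length (filter ((\<le>) t) xs)\<close> show False
        by (simp add: count)
    qed
  qed
qed

lemma rev_sort_append_nth_length:
  fixes xs ys :: "'a::linorder list"
  assumes "ys \<noteq> []" and dom: "\<And>i. i < length xs \<Longrightarrow> rev (sort (xs @ ys)) ! i \<le> xs ! i"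
  shows "rev (sort (xs @ ys)) ! length xs = Max (set ys)"
proof -
  define L where "L = rev (sort (xs @ ys))"
  define k where "k = length xs"
  have k: "k < length (xs @ ys)"
    using assms(1) by (simp add: k_def)
  have "y \<le> L ! k" if y: "y \<in> set ys" for y
  proof (rule ccontr)
    assume "\<not> y \<le> L ! k"
    define c where "c = length (filter ((\<le>) y) (xs @ ys))"
    have "c \<le> k"
      using le_rev_sort_nth_iff[OF k, of y] \<open>\<not> y \<le> L ! k\<close> by (simp add: L_def c_def)
    have "y \<le> xs ! i" if "i < c" for i
    proof -
      have "y \<le> L ! i"
        using le_rev_sort_nth_iff[of i "xs @ ys" y] that \<open>c \<le> k\<close> k
        by (simp add: L_def c_def)
      also have "\<dots> \<le> xs ! i"
        using dom that \<open>c \<le> k\<close> by (simp add: L_def k_def)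
      finally show ?thesis .
    qed
    then have "c \<le> length (filter ((\<le>) y) xs)"
      using \<open>c \<le> k\<close> by (intro length_filter_ge) (simp_all add: k_def)
    moreover have "filter ((\<le>) y) ys \<noteq> []"
      using y by (auto simp: filter_empty_conv)
    ultimately show False
      by (simp add: c_def)
  qed
  moreover have "\<exists>y\<in>set ys. L ! k \<le> y"
  proof -
    have "k < length (filter ((\<le>) (L ! k)) (xs @ ys))"
      using le_rev_sort_nth_iff[OF k, of "L ! k"] by (simp add: L_def)
    moreover have "length (filter ((\<le>) (L ! k)) xs) \<le> k"
      by (simp add: k_def)
    ultimately have "filter ((\<le>) (L ! k)) ys \<noteq> []"
      by auto
    then show ?thesis
      by (auto simp: filter_empty_conv)
  qed
  ultimately show ?thesis
    using assms(1) by (metis L_def k_def Max_eqI List.finite_set antisym)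
qed

(* The hypothesis on mus says that V consists of eigenvectors for the largest eigenvalues;
   the next eigenvalue is then the maximum of \<parallel>A y\<parallel>\<^sup>2 on the unit sphere of orth_compl V.
   It is identified with sv_eigs A ! length V by completing V and the maximiser to an
   eigenbasis whose remaining eigenvalues are all below the maximum. *)
lemma sv_eigs_nth_variational:
  fixes A :: "complex^'n^'n"
  assumes V: "orthonormal V" "eigenpairs (adjoint_mat A ** A) V mus"
    and len: "length V < CARD('n)"
    and dom: "\<And>i. i < length V \<Longrightarrow> sv_eigs A ! i \<le> mus ! i"
  shows "\<And>y. y \<in> orth_compl V \<Longrightarrow> (norm (A *v y))\<^sup>2 \<le> sv_eigs A ! length V * (norm y)\<^sup>2"
    and "\<exists>x\<in>orth_compl V. norm x = 1 \<and> (norm (A *v x))\<^sup>2 = sv_eigs A ! length V"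
proof -
  let ?H = "adjoint_mat A ** A"
  obtain x where x: "x \<in> orth_compl V" "norm x = 1" "?H *v x = (norm (A *v x))\<^sup>2 *\<^sub>R x"
    and max: "\<And>y. y \<in> orth_compl V \<Longrightarrow> (norm (A *v y))\<^sup>2 \<le> (norm (A *v x))\<^sup>2 * (norm y)\<^sup>2"
    using exists_gram_eigenvector_orth_compl[OF V len] by blast
  define m where "m = (norm (A *v x))\<^sup>2"
  have "orthonormal (V @ [x])"
    using V(1) x by (simp add: orthonormal_append orthonormal_single)
  moreover have "eigenpairs ?H (V @ [x]) (mus @ [m])"
    using V(2) x(3) by (simp add: list_all2_appendI m_def)
  ultimately obtain W es where B: "orthonormal (V @ x # W)" "eigenpairs ?H (V @ x # W) (mus @ m # es)"
    "length (V @ x # W) = CARD('n)"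
    using extend_gram_eigenbasis[of "V @ [x]" A "mus @ [m]"] len by fastforce
  have len_mus: "length mus = length V"
    using V(2) by (rule list_all2_lengthD[symmetric])
  have W: "set W \<subseteq> orth_compl V" "orthonormal W" "eigenpairs ?H W es"
    using B(1,2) len_mus orthonormal_append[of "[x]" W]
    by (simp_all add: orthonormal_append list_all2_append)
  have "e \<le> m" if e: "e \<in> set es" for e
  proof -
    obtain j where j: "j < length W" "e = es ! j"
      using e list_all2_lengthD[OF W(3)] by (auto simp: in_set_conv_nth)
    then have "W ! j \<in> set W"
      by simp
    then have "e = (norm (A *v (W ! j)))\<^sup>2"
      using W j list_all2_nthD[OF W(3) j(1)] by (intro gram_eigenvalue) (auto simp: orthonormal_def)
    also have "\<dots> \<le> m"
      using max[of "W ! j"] W(1) \<open>W ! j \<in> set W\<close> W(2) by (auto simp: m_def orthonormal_def)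
    finally show ?thesis .
  qed
  then have "Max (set (m # es)) = m"
    by (intro Max_eqI) auto
  moreover have "sv_eigs A = rev (sort (mus @ m # es))"
    using B by (rule sv_eigs_of_eigenbasis)
  ultimately have m_eq: "sv_eigs A ! length V = m"
    using rev_sort_append_nth_length[of "m # es" mus] dom len_mus by simp
  show "(norm (A *v y))\<^sup>2 \<le> sv_eigs A ! length V * (norm y)\<^sup>2" if "y \<in> orth_compl V" for y
    using max[OF that] by (simp add: m_eq m_def)
  show "\<exists>x\<in>orth_compl V. norm x = 1 \<and> (norm (A *v x))\<^sup>2 = sv_eigs A ! length V"
    using x by (auto simp: m_eq m_def)
qed

section \<open>Holomorphic matrix functions\<close>

lemma vector_maximum_modulus_principle:
  fixes g :: "complex \<Rightarrow> complex^'n"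
  assumes "open \<Omega>" "connected \<Omega>" "\<And>i. (\<lambda>z. g z $ i) holomorphic_on \<Omega>"
    and "z0 \<in> \<Omega>" "\<And>z. z \<in> \<Omega> \<Longrightarrow> norm (g z) \<le> norm (g z0)" and "z \<in> \<Omega>"
  shows "g z = g z0"
proof -
  define f where "f w = cinner (g w) (g z0)" for w
  have f0: "f z0 = of_real ((norm (g z0))\<^sup>2)"
    by (simp add: f_def cinner_self)
  then have norm_f0: "norm (f z0) = norm (g z0) * norm (g z0)"
    by (simp add: norm_mult power2_eq_square)
  have "f holomorphic_on \<Omega>"
    unfolding f_def cinner_def by (intro holomorphic_intros assms(3))
  moreover have "norm (f w) \<le> norm (f z0)" if "w \<in> \<Omega>" for w
  proof -
    have "norm (f w) \<le> norm (g w) * norm (g z0)"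
      unfolding f_def by (rule norm_cinner_le)
    also have "\<dots> \<le> norm (g z0) * norm (g z0)"
      using assms(5)[OF that] by (simp add: mult_right_mono)
    finally show ?thesis
      by (simp only: norm_f0)
  qed
  ultimately have "f constant_on \<Omega>"
    using assms(1,2,4) by (intro maximum_modulus_principle[of f \<Omega> \<Omega> z0]) auto
  then have "f z = f z0"
    using assms(4,6) by (auto simp: constant_on_def)
  then have "(norm (g z - g z0))\<^sup>2 = (norm (g z))\<^sup>2 - (norm (g z0))\<^sup>2"
    unfolding norm_diff_square_cinner by (simp add: f0 flip: f_def)
  also have "\<dots> \<le> 0"
    using assms(5)[OF assms(6)] by (simp add: power_mono)
  finally show ?thesis
    by simp
qed

lemma holomorphic_common_gram_eigenvector:
  fixes F :: "complex \<Rightarrow> complex^'n^'n"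
  assumes \<Omega>: "open \<Omega>" "connected \<Omega>" and hol: "\<And>i j. (\<lambda>z. F z $ i $ j) holomorphic_on \<Omega>"
    and V: "orthonormal V" "length V < CARD('n)"
      "\<And>z. z \<in> \<Omega> \<Longrightarrow> eigenpairs (adjoint_mat (F z) ** F z) V mus"
    and dom: "\<And>z i. z \<in> \<Omega> \<Longrightarrow> i < length V \<Longrightarrow> sv_eigs (F z) ! i \<le> mus ! i"
    and max: "z' \<in> \<Omega>" "\<And>z. z \<in> \<Omega> \<Longrightarrow> sv_eigs (F z) ! length V \<le> sv_eigs (F z') ! length V"
  obtains x where "x \<in> orth_compl V" "norm x = 1" "\<And>z. z \<in> \<Omega> \<Longrightarrow> F z *v x = F z' *v x"
    "\<And>z. z \<in> \<Omega> \<Longrightarrow> (adjoint_mat (F z) ** F z) *v x = sv_eigs (F z') ! length V *\<^sub>R x"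
proof -
  define m where "m = sv_eigs (F z') ! length V"
  have bound: "(norm (F z *v y))\<^sup>2 \<le> m * (norm y)\<^sup>2" if "z \<in> \<Omega>" "y \<in> orth_compl V" for z y
  proof -
    have "(norm (F z *v y))\<^sup>2 \<le> sv_eigs (F z) ! length V * (norm y)\<^sup>2"
      using sv_eigs_nth_variational(1)[OF V(1) V(3)[OF \<open>z \<in> \<Omega>\<close>] V(2) dom[OF \<open>z \<in> \<Omega>\<close>] that(2)] .
    also have "\<dots> \<le> m * (norm y)\<^sup>2"
      using max(2)[OF \<open>z \<in> \<Omega>\<close>] by (simp add: m_def mult_right_mono)
    finally show ?thesis .
  qed
  obtain x where x: "x \<in> orth_compl V" "norm x = 1" "(norm (F z' *v x))\<^sup>2 = m"
    using sv_eigs_nth_variational(2)[OF V(1) V(3)[OF max(1)] V(2) dom[OF max(1)]] m_def by blast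
  have const: "F z *v x = F z' *v x" if "z \<in> \<Omega>" for z
  proof (rule vector_maximum_modulus_principle[OF \<Omega>, where g = "\<lambda>z. F z *v x"])
    show "(\<lambda>z. (F z *v x) $ i) holomorphic_on \<Omega>" for i
      unfolding matrix_vector_mult_def vec_lambda_beta by (intro holomorphic_intros hol)
    show "norm (F w *v x) \<le> norm (F z' *v x)" if "w \<in> \<Omega>" for w
      using bound[OF that x(1)] x(2,3) by (simp add: power2_le_imp_le)
  qed (use max(1) that in auto)
  show thesis
  proof (rule that[OF x(1,2) const])
    show "(adjoint_mat (F z) ** F z) *v x = sv_eigs (F z') ! length V *\<^sub>R x" if "z \<in> \<Omega>" for z
      using V(3)[OF that] bound[OF that] x(1,2) x(3)[folded const[OF that]]
      unfolding m_def by (rule gram_eigenvector_of_maximizer)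
  qed
qed

lemma holomorphic_const_on_orthonormal_basis:
  fixes F :: "complex \<Rightarrow> complex^'n^'n"
  assumes \<Omega>: "open \<Omega>" "connected \<Omega>" and hol: "\<And>i j. (\<lambda>z. F z $ i $ j) holomorphic_on \<Omega>"
    and z0: "z0 \<in> \<Omega>"
    and max: "\<And>k. k < CARD('n) \<Longrightarrow> \<exists>z'\<in>\<Omega>. \<forall>z\<in>\<Omega>. sv_eigs (F z) ! k \<le> sv_eigs (F z') ! k"
  obtains B where "orthonormal B" "length B = CARD('n)" "\<And>v z. v \<in> set B \<Longrightarrow> z \<in> \<Omega> \<Longrightarrow> F z *v v = F z0 *v v"
proof -
  obtain zs where zs: "\<And>k. k < CARD('n) \<Longrightarrow> zs k \<in> \<Omega>"
    "\<And>k z. k < CARD('n) \<Longrightarrow> z \<in> \<Omega> \<Longrightarrow> sv_eigs (F z) ! k \<le> sv_eigs (F (zs k)) ! k"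
    using max by metis
  define lam where "lam k = sv_eigs (F (zs k)) ! k" for k
  have "\<exists>V. length V = k \<and> orthonormal V \<and>
      (\<forall>z\<in>\<Omega>. eigenpairs (adjoint_mat (F z) ** F z) V (map lam [0..<k])) \<and>
      (\<forall>v\<in>set V. \<forall>z\<in>\<Omega>. F z *v v = F z0 *v v)" if "k \<le> CARD('n)" for k
    using that
  proof (induction k)
    case 0
    then show ?case
      by (simp add: orthonormal_def)
  next
    case (Suc k)
    then obtain V where V: "length V = k" "orthonormal V"
      "\<And>z. z \<in> \<Omega> \<Longrightarrow> eigenpairs (adjoint_mat (F z) ** F z) V (map lam [0..<k])"
      "\<And>v z. v \<in> set V \<Longrightarrow> z \<in> \<Omega> \<Longrightarrow> F z *v v = F z0 *v v"
      by auto
    have k: "k < CARD('n)"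
      using Suc.prems by simp
    obtain x where x: "x \<in> orth_compl V" "norm x = 1"
      "\<And>z. z \<in> \<Omega> \<Longrightarrow> F z *v x = F (zs k) *v x"
      "\<And>z. z \<in> \<Omega> \<Longrightarrow> (adjoint_mat (F z) ** F z) *v x = lam k *\<^sub>R x"
      using holomorphic_common_gram_eigenvector[OF \<Omega> hol V(2) _ V(3), of "zs k"] V(1) k zs
      by (auto simp: lam_def)
    show ?case
    proof (intro exI conjI ballI)
      show "length (V @ [x]) = Suc k" "orthonormal (V @ [x])"
        using V(1,2) x(1,2) by (simp_all add: orthonormal_append orthonormal_single)
      show "eigenpairs (adjoint_mat (F z) ** F z) (V @ [x]) (map lam [0..<Suc k])" if "z \<in> \<Omega>" for z
        using V(3)[OF that] x(4)[OF that] by (simp add: list_all2_appendI)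
      show "F z *v v = F z0 *v v" if "v \<in> set (V @ [x])" "z \<in> \<Omega>" for v z
        using that V(4) x(3)[OF \<open>z \<in> \<Omega>\<close>] x(3)[OF z0] by auto
    qed
  qed
  from this[OF order_refl] obtain B where "length B = CARD('n)" "orthonormal B"
    "\<forall>v\<in>set B. \<forall>z\<in>\<Omega>. F z *v v = F z0 *v v"
    by blast
  then show thesis
    by (intro that) auto
qed

theorem theorem5:
  fixes \<Omega> :: "complex set" and F :: "complex \<Rightarrow> complex^'n^'n"
  assumes "open \<Omega>" and "connected \<Omega>" and "\<Omega> \<noteq> {}"
    and "\<And>i j. (\<lambda>z. F z $ i $ j) analytic_on \<Omega>"
    and "\<And>k. k \<in> {1..CARD('n)} \<Longrightarrow>
           \<exists>zk\<in>\<Omega>. \<forall>z\<in>\<Omega>. sing_val k (F z) \<le> sing_val k (F zk)"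
  shows "\<exists>C. \<forall>z\<in>\<Omega>. F z = C"
proof -
  obtain z0 where z0: "z0 \<in> \<Omega>"
    using assms(3) by blast
  have hol: "(\<lambda>z. F z $ i $ j) holomorphic_on \<Omega>" for i j
    using assms(4) by (rule analytic_imp_holomorphic)
  have "\<exists>z'\<in>\<Omega>. \<forall>z\<in>\<Omega>. sv_eigs (F z) ! k \<le> sv_eigs (F z') ! k" if "k < CARD('n)" for k
    using assms(5)[of "Suc k"] that by (simp add: sing_val_def)
  then obtain B where B: "orthonormal B" "length B = CARD('n)"
    "\<And>v z. v \<in> set B \<Longrightarrow> z \<in> \<Omega> \<Longrightarrow> F z *v v = F z0 *v v"
    using holomorphic_const_on_orthonormal_basis[OF assms(1,2) hol z0] by blast
  have "F z = F z0" if "z \<in> \<Omega>" for z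
    using B(1,2) B(3)[OF _ that] by (rule matrix_eq_on_orthonormal_basis)
  then show ?thesis
    by blast
qed

end
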